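(* In the setting of the context, let $(x_0,y_0)\in\mathcal D^+_{\bar y}$, let $T_0=T(x_0,y_0)$ and $T_1=T_0+\dfrac{h(x_0,y_0)-\bar x}{\gamma\bar y}$. Define $\tilde x(t)=h(x_0,y_0)-\gamma(t-T_0)\bar y$ and the control $$u^*(t)=\begin{cases}0 & \text{if } t<T_0 \text{ or } t>T_1,\\ \rho(\tilde x(t),\bar y) & \text{if } T_0\le t\le T_1.\end{cases}$$ Let $(x^*(t),y^*(t))$ be the solution of the controlled CBF-SIR model with initial condition $(x_0,y_0)$ under $u^*$. Then: (i) for $T_0<t<T_1$, $x^*(t)=h(x_0,y_0)-\gamma(t-T_0)\bar y$ and $y^*(t)=\bar y$; (ii) $u^*(t)=\mu(x^*(t),y^*(t))$ for every $t\ge0$, where $\mu(x,y)=0$ if $y<\bar y$ and $\mu(x,\bar y)=[\rho(x,\bar y)]_+$; (iii) $u^*$ is feasible, i.e. $y^*(t)\le\bar y$ for all $t\ge0$; (iv) $J(u^* )=\displaystyle\int_0^{\infty}u^*(t)\,dt=\frac{1}{\gamma\bar y}\int_{\bar x}^{h(x_0,y_0)}\rho(x,\bar y)\,dx.$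
   Context: $\mathcal S=\{(x,y)\in\mathbb R^2_+: x+y\le1\}$, $\gamma>0$, $\beta:\mathcal S\to(0,\infty)$ of class $\mathcal C^2$, $R(x,y)=\frac1\gamma\beta(x,y)x$, and for $x>0$, $\rho(x,y)=\frac{R(x,y)-1}{R(x,y)}=1-\frac{\gamma}{x\beta(x,y)}$; $[a]_+=\max\{a,0\}$. Assumption 1 holds: $x\beta_x+\beta>0$ and $\beta_y\le0$ on $\mathcal S$. Controlled CBF-SIR model: $\dot x=-(1-u(t))\gamma R(x,y)y$, $\dot y=\gamma((1-u(t))R(x,y)-1)y$ (solutions continuous, piecewise-$\mathcal C^1$, in $\mathcal S$); uncontrolled model: $u\equiv0$, with flow $\phi(t,x_0,y_0)$; $\Gamma^+(x_0,y_0)=\{\phi(t,x_0,y_0):t\ge0\}$, $\Gamma^-(x,y)=\{(x_0,y_0)\in\mathcal S:(x,y)\in\Gamma^+(x_0,y_0)\}$. Assume $\beta(1,0)>\gamma$; $\tilde y\in(0,1)$ is the unique number with $R(1-\tilde y,\tilde y)=1$, $\kappa:[0,\tilde y]\to[0,1]$ the $\mathcal C^1$ function with $\{R=1\}\cap\mathcal S=\{(\kappa(y),y):y\in[0,\tilde y]\}$. Fix $\bar y\in(0,\tilde y)$ and $\bar x=\kappa(\bar y)$. There are $\hat y\in[0,\bar y]$ and a $\mathcal C^1$ strictly decreasing $\lambda:[\hat y,\bar y]\to[\bar x,1]$ with $\lambda(\bar y)=\bar x$ and $\overline{\Gamma^-(\bar x,\bar y)}=\{(\lambda(y),y):\hat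 y\le y\le\bar y\}$. $\mathcal D_{\bar y}=\{(x,y)\in\mathcal S:0<y\le\bar y\}$, $\mathcal D^+_{\bar y}=\{(x,y)\in\mathcal D_{\bar y}: y\in[\hat y,\bar y],\ x>\lambda(y)\}$, $\mathcal J=\{(x,\bar y)\in\mathcal S:\bar x<x\le1-\bar y\}$. For $(x,y)\in\mathcal D^+_{\bar y}$, $T(x,y)$ is the (finite) first time $t\ge0$ with $\phi(t,x,y)\in\mathcal J$ and $h(x,y)$ is the first coordinate of $\phi(T(x,y),x,y)$. A control is feasible if the corresponding solution satisfies $y(t)\le\bar y$ for all $t\ge0$. *)

theory Defs
  imports "HOL-Analysis.Analysis"
begin

definition SS :: "(real \<times> real) set" where
  "SS = {(x, y). 0 \<le> x \<and> 0 \<le> y \<and> x + y \<le> 1}"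

definition Rn :: "real \<Rightarrow> (real \<Rightarrow> real \<Rightarrow> real) \<Rightarrow> real \<Rightarrow> real \<Rightarrow> real" where
  "Rn \<gamma> \<beta> x y = \<beta> x y * x / \<gamma>"

definition rho :: "real \<Rightarrow> (real \<Rightarrow> real \<Rightarrow> real) \<Rightarrow> real \<Rightarrow> real \<Rightarrow> real" where
  "rho \<gamma> \<beta> x y = 1 - \<gamma> / (x * \<beta> x y)"

definition pos_part :: "real \<Rightarrow> real" where
  "pos_part a = max a 0"

text \<open>Solution of the controlled CBF-SIR model with control u, initial point p:
  continuous on [0,oo), staying in S, piecewise C1 (satisfying the ODE off a
  locally finite set of break points).\<close>
definition cbf_sol ::
  "real \<Rightarrow> (real \<Rightarrow> real \<Rightarrow> real) \<Rightarrow> (real \<Rightarrow> real) \<Rightarrow> real \<times> real \<Rightarrow> (real \<Rightarrow> real \<times> real) \<Rightarrow> bool" where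
  "cbf_sol \<gamma> \<beta> u p z \<longleftrightarrow>
     z 0 = p \<and> continuous_on {0..} z \<and> (\<forall>t\<ge>0. z t \<in> SS) \<and>
     (\<exists>F. (\<forall>b. finite (F \<inter> {0..b})) \<and>
        (\<forall>t\<in>{0<..} - F.
           (z has_vector_derivative
              (- (1 - u t) * \<gamma> * Rn \<gamma> \<beta> (fst (z t)) (snd (z t)) * snd (z t),
               \<gamma> * ((1 - u t) * Rn \<gamma> \<beta> (fst (z t)) (snd (z t)) - 1) * snd (z t))) (at t)))"

definition Gamma_minus :: "(real \<Rightarrow> real \<times> real \<Rightarrow> real \<times> real) \<Rightarrow> real \<times> real \<Rightarrow> (real \<times> real) set" where
  "Gamma_minus phi q = {p \<in> SS. \<exists>t\<ge>0. phi t p = q}"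

definition D_plus :: "real \<Rightarrow> real \<Rightarrow> (real \<Rightarrow> real) \<Rightarrow> (real \<times> real) set" where
  "D_plus ybar yhat lam = {(x, y) \<in> SS. 0 < y \<and> y \<le> ybar \<and> yhat \<le> y \<and> lam y < x}"

definition J_set :: "real \<Rightarrow> real \<Rightarrow> (real \<times> real) set" where
  "J_set xbar ybar = {(x, y) \<in> SS. y = ybar \<and> xbar < x \<and> x \<le> 1 - ybar}"

definition T_hit :: "(real \<Rightarrow> real \<times> real \<Rightarrow> real \<times> real) \<Rightarrow> real \<Rightarrow> real \<Rightarrow> real \<times> real \<Rightarrow> real" where
  "T_hit phi xbar ybar p = (LEAST t. 0 \<le> t \<and> phi t p \<in> J_set xbar ybar)"

definition h_hit :: "(real \<Rightarrow> real \<times> real \<Rightarrow> real \<times> real) \<Rightarrow> real \<Rightarrow> real \<Rightarrow> real \<times> real \<Rightarrow> real" where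
  "h_hit phi xbar ybar p = fst (phi (T_hit phi xbar ybar p) p)"

definition mu :: "real \<Rightarrow> (real \<Rightarrow> real \<Rightarrow> real) \<Rightarrow> real \<Rightarrow> real \<Rightarrow> real \<Rightarrow> real" where
  "mu \<gamma> \<beta> ybar x y = (if y < ybar then 0 else pos_part (rho \<gamma> \<beta> x ybar))"

end

theory Submission
  imports Defs
begin

text \<open>
  Before \<open>T0\<close> the control vanishes, so the trajectory is the uncontrolled orbit. Starting to the
  right of the separatrix \<open>\<Gamma>\<^sup>-(xbar, ybar)\<close>, this orbit cannot meet the separatrix, so it reaches the
  level \<open>ybar\<close> while \<open>R > 1\<close>, i.e. at a point \<open>(h0, ybar)\<close> with \<open>h0 > xbar\<close>. On \<open>[T0, T1]\<close> the control
  \<open>\<rho>\<close> makes \<open>(1 - u) R = 1\<close>, so the horizontal segment from \<open>(h0, ybar)\<close> to \<open>(xbar, ybar)\<close>, run at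
  speed \<open>\<gamma> ybar\<close>, solves the controlled system; the vector field is Lipschitz on the simplex, so by
  Gronwall this segment is the trajectory. After \<open>T1\<close> the control vanishes again, and along the
  uncontrolled orbit of \<open>(xbar, ybar)\<close> we have \<open>R < 1\<close>, because by Assumption 1 the function \<open>R\<close> can
  cross the level 1 only downwards; hence \<open>y\<close> decreases. The cost is the integral of \<open>\<rho>\<close> along the
  segment, which the affine substitution \<open>x = h0 - \<gamma> ybar (t - T0)\<close> turns into the stated integral.
\<close>

section \<open>Real analysis\<close>

lemma DERIV_nonneg_imp_nondecreasing_finite:
  fixes f :: "real \<Rightarrow> real"
  assumes "finite S" "a \<le> b" "continuous_on {a..b} f"
    and "\<And>t. t \<in> {a<..<b} - S \<Longrightarrow> (f has_real_derivative f' t) (at t)"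
    and "\<And>t. t \<in> {a<..<b} - S \<Longrightarrow> 0 \<le> f' t"
  shows "f a \<le> f b"
proof -
  define g where "g t = (if t \<in> {a<..<b} - S then f' t else 0)" for t
  have "(g has_integral (f b - f a)) {a..b}"
    using assms(4)
    by (intro fundamental_theorem_of_calculus_interior_strong[OF assms(1,2) _ assms(3)])
      (simp add: g_def has_real_derivative_iff_has_vector_derivative)
  then have "0 \<le> f b - f a"
    by (rule has_integral_nonneg) (simp add: g_def assms(5))
  then show ?thesis by simp
qed

lemma DERIV_pos_imp_increasing_finite:
  fixes f :: "real \<Rightarrow> real"
  assumes S: "finite S" and "a < b" and cont: "continuous_on {a..b} f"
    and der: "\<And>t. t \<in> {a<..<b} - S \<Longrightarrow> (f has_real_derivative f' t) (at t)"
    and pos: "\<And>t. t \<in> {a<..<b} - S \<Longrightarrow> 0 < f' t"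
  shows "f a < f b"
proof -
  have mono: "f c \<le> f d" if "a \<le> c" "c \<le> d" "d \<le> b" for c d
    using that cont der pos
    by (intro DERIV_nonneg_imp_nondecreasing_finite[OF S \<open>c \<le> d\<close>, of f f'])
      (auto intro: continuous_on_subset less_imp_le)
  have "infinite ({a<..<b} - S)"
    using \<open>a < b\<close> S by (simp add: Diff_infinite_finite)
  then obtain t where t: "t \<in> {a<..<b} - S"
    by (metis finite.emptyI ex_in_conv)
  obtain d where "d > 0" and d: "\<And>h. 0 < h \<Longrightarrow> h < d \<Longrightarrow> f t < f (t + h)"
    using DERIV_pos_inc_right[OF der[OF t] pos[OF t]] by blast
  define h where "h = min (d / 2) (b - t)"
  have h: "0 < h" "h < d" "t + h \<le> b"
    using \<open>d > 0\<close> t by (auto simp: h_def)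
  have "f a \<le> f t" "f (t + h) \<le> f b"
    using t h by (auto intro: mono)
  with d[OF h(1,2)] show ?thesis by linarith
qed

text \<open>Gronwall's argument: \<open>exp (- 2 L t) \<parallel>w t\<parallel>\<^sup>2\<close> is nonincreasing.\<close>
lemma vanishes_if_derivative_linearly_bounded:
  fixes w :: "real \<Rightarrow> 'a::real_inner"
  assumes S: "finite S" and "a \<le> b" and cont: "continuous_on {a..b} w" and "w a = 0"
    and der: "\<And>t. t \<in> {a<..<b} - S \<Longrightarrow> (w has_vector_derivative w' t) (at t)"
    and bound: "\<And>t. t \<in> {a<..<b} - S \<Longrightarrow> norm (w' t) \<le> L * norm (w t)"
  shows "w b = 0"
proof -
  define g where "g t = - (exp (- 2 * L * t) * (w t \<bullet> w t))" for t
  have "g a \<le> g b"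
  proof (rule DERIV_nonneg_imp_nondecreasing_finite[OF S \<open>a \<le> b\<close>])
    show "continuous_on {a..b} g"
      unfolding g_def by (intro continuous_intros cont)
    fix t assume t: "t \<in> {a<..<b} - S"
    have "((\<lambda>t. w t \<bullet> w t) has_derivative (\<lambda>h. w t \<bullet> (h *\<^sub>R w' t) + (h *\<^sub>R w' t) \<bullet> w t)) (at t)"
      using der[OF t] unfolding has_vector_derivative_def by (intro has_derivative_inner)
    moreover have "(\<lambda>h. w t \<bullet> (h *\<^sub>R w' t) + (h *\<^sub>R w' t) \<bullet> w t) = (*) (2 * (w t \<bullet> w' t))"
      by (rule ext) (simp add: inner_commute algebra_simps)
    ultimately have "((\<lambda>t. w t \<bullet> w t) has_real_derivative 2 * (w t \<bullet> w' t)) (at t)"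
      by (simp add: has_field_derivative_def)
    then show "(g has_real_derivative
        - (exp (- 2 * L * t) * (- 2 * L) * (w t \<bullet> w t) + exp (- 2 * L * t) * (2 * (w t \<bullet> w' t)))) (at t)"
      unfolding g_def by (auto intro!: derivative_eq_intros)
    have "w t \<bullet> w' t \<le> norm (w t) * (L * norm (w t))"
      using norm_cauchy_schwarz[of "w t" "w' t"] mult_left_mono[OF bound[OF t], of "norm (w t)"]
      by simp
    then have "w t \<bullet> w' t \<le> L * (w t \<bullet> w t)"
      by (simp add: dot_square_norm power2_eq_square algebra_simps)
    then show "0 \<le> - (exp (- 2 * L * t) * (- 2 * L) * (w t \<bullet> w t) + exp (- 2 * L * t) * (2 * (w t \<bullet> w' t)))"
      using mult_left_mono[of "2 * (w t \<bullet> w' t)" "2 * L * (w t \<bullet> w t)" "exp (- 2 * L * t)"]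
      by (simp add: algebra_simps)
  qed
  then have "w b \<bullet> w b \<le> 0"
    using \<open>w a = 0\<close> by (simp add: g_def mult_le_0_iff)
  then show ?thesis
    using inner_gt_zero_iff[of "w b"] by linarith
qed

lemma first_level_crossing:
  fixes g :: "real \<Rightarrow> real"
  assumes "a \<le> b" and cont: "continuous_on {a..b} g" and "g a < c" "c \<le> g b"
  obtains s where "a < s" "s \<le> b" "g s = c" "\<And>r. a \<le> r \<Longrightarrow> r < s \<Longrightarrow> g r < c"
proof -
  define A where "A = {a..b} \<inter> g -` {c..}"
  have "closed A"
    unfolding A_def by (rule continuous_closed_preimage[OF cont]) auto
  moreover have "A \<noteq> {}" "bdd_below A"
    using assms by (auto simp: A_def bdd_below_def)
  ultimately have sA: "Inf A \<in> A"
    by (intro closed_contains_Inf)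
  have below: "g r < c" if "a \<le> r" "r < Inf A" for r
    using that cInf_lower[OF _ \<open>bdd_below A\<close>, of r] sA by (force simp: A_def)
  have "g (Inf A) \<le> c"
  proof (rule ccontr)
    assume "\<not> g (Inf A) \<le> c"
    moreover obtain x where "a \<le> x" "x \<le> Inf A" "g x = c"
      using IVT'[of g a c "Inf A"] assms sA continuous_on_subset[OF cont, of "{a..Inf A}"]
      by (auto simp: A_def)
    ultimately show False
      using below[of x] by (cases "x = Inf A") auto
  qed
  moreover have "a \<noteq> Inf A"
    using sA assms by (auto simp: A_def)
  ultimately show ?thesis
    using that[of "Inf A"] sA below by (auto simp: A_def)
qed

lemma negative_near_if_continuous_on:
  fixes f :: "real \<Rightarrow> real"
  assumes "continuous_on A f" "s \<in> A" "f s < 0"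
  obtains d where "d > 0" "\<And>t. t \<in> A \<Longrightarrow> \<bar>t - s\<bar> < d \<Longrightarrow> f t < 0"
proof -
  obtain d where "d > 0" "\<forall>t\<in>A. dist t s < d \<longrightarrow> dist (f t) (f s) < - f s"
    using assms(1)[unfolded continuous_on_iff, rule_format, OF assms(2), of "- f s"] assms(3)
    by auto
  then show ?thesis
    using that[of d] by (auto simp: dist_real_def abs_less_iff)
qed

lemma strictly_decreasing_near_negative_derivative:
  fixes f f' :: "real \<Rightarrow> real"
  assumes cont: "continuous_on {a..} f" and cont': "continuous_on {a..} f'"
    and der: "\<And>b. \<exists>S. finite S \<and> (\<forall>t\<in>{a<..<b} - S. (f has_real_derivative f' t) (at t))"
    and "a \<le> s" "f' s < 0"
  obtains d where "0 < d" "\<And>r. a \<le> r \<Longrightarrow> r < s \<Longrightarrow> s - d < r \<Longrightarrow> f s < f r"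
    "\<And>r. s < r \<Longrightarrow> r < s + d \<Longrightarrow> f r < f s"
proof -
  have decreasing: "f q < f r" if "a \<le> r" "r < q" "\<And>x. x \<in> {r..q} \<Longrightarrow> f' x < 0" for r q
  proof -
    obtain S where S: "finite S" "\<forall>t\<in>{a<..<q} - S. (f has_real_derivative f' t) (at t)"
      using der by blast
    have "- f r < - f q"
    proof (rule DERIV_pos_imp_increasing_finite[OF S(1) \<open>r < q\<close>])
      show "continuous_on {r..q} (\<lambda>t. - f t)"
        using \<open>a \<le> r\<close> by (intro continuous_intros continuous_on_subset[OF cont]) auto
      fix t assume "t \<in> {r<..<q} - S"
      then show "((\<lambda>t. - f t) has_real_derivative - f' t) (at t)" "0 < - f' t"
        using S(2) \<open>a \<le> r\<close> that(3) by (auto intro!: DERIV_minus)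
    qed
    then show ?thesis by simp
  qed
  obtain d where "0 < d" and d: "\<And>x. x \<in> {a..} \<Longrightarrow> \<bar>x - s\<bar> < d \<Longrightarrow> f' x < 0"
    using negative_near_if_continuous_on[OF cont'] assms(4,5) by auto
  show ?thesis
  proof (rule that[OF \<open>0 < d\<close>])
    fix r assume "a \<le> r" "r < s" "s - d < r"
    then show "f s < f r"
      by (intro decreasing d) auto
  next
    fix r assume "s < r" "r < s + d"
    then show "f r < f s"
      using \<open>a \<le> s\<close> by (intro decreasing d) auto
  qed
qed

lemma below_level_persists:
  fixes f f' :: "real \<Rightarrow> real"
  assumes cont: "continuous_on {a..} f" and cont': "continuous_on {a..} f'"
    and der: "\<And>b. \<exists>S. finite S \<and> (\<forall>t\<in>{a<..<b} - S. (f has_real_derivative f' t) (at t))"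
    and crossing: "\<And>s. a \<le> s \<Longrightarrow> f s = c \<Longrightarrow> f' s < 0"
    and "a \<le> t0" "f t0 \<le> c" "t0 < t"
  shows "f t < c"
proof (rule ccontr)
  assume "\<not> f t < c"
  note near = strictly_decreasing_near_negative_derivative[OF cont cont' der _ crossing]
  obtain t1 where t1: "t0 \<le> t1" "t1 < t" "f t1 < c"
  proof (cases "f t0 = c")
    case True
    then obtain d where "0 < d" and d: "\<And>r. t0 < r \<Longrightarrow> r < t0 + d \<Longrightarrow> f r < f t0"
      using near[of t0] \<open>a \<le> t0\<close> by metis
    have "t0 < t0 + min d (t - t0) / 2" "t0 + min d (t - t0) / 2 < min (t0 + d) t"
      using \<open>0 < d\<close> \<open>t0 < t\<close> by (auto simp: min_def field_simps)
    then show ?thesis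
      using that[of "t0 + min d (t - t0) / 2"] d True by force
  next
    case False
    then show ?thesis
      using that[of t0] \<open>f t0 \<le> c\<close> \<open>t0 < t\<close> by auto
  qed
  obtain s where s: "t1 < s" "s \<le> t" "f s = c" "\<And>r. t1 \<le> r \<Longrightarrow> r < s \<Longrightarrow> f r < c"
    using first_level_crossing[of t1 t f c] t1 \<open>\<not> f t < c\<close> \<open>a \<le> t0\<close>
      continuous_on_subset[OF cont, of "{t1..t}"] by auto
  then obtain d where "0 < d" and d: "\<And>r. a \<le> r \<Longrightarrow> r < s \<Longrightarrow> s - d < r \<Longrightarrow> f s < f r"
    using near[of s] t1 \<open>a \<le> t0\<close> by (metis order.trans less_imp_le)
  define r where "r = max t1 (s - d / 2)"
  have "f s < f r"
    using s t1 \<open>a \<le> t0\<close> \<open>0 < d\<close> by (intro d) (auto simp: r_def)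
  moreover have "f r < c"
    using s \<open>0 < d\<close> by (intro s(4)) (auto simp: r_def)
  ultimately show False
    using s(3) by simp
qed

lemma has_integral_reversed_affine:
  fixes f :: "real \<Rightarrow> real"
  assumes "0 < k" "a \<le> b" "continuous_on {a..b} f"
  shows "((\<lambda>t. f (b - k * (t - t0))) has_integral integral {a..b} f / k) {t0..t0 + (b - a) / k}"
proof -
  have "(f has_integral integral {a..b} f) (cbox a b)"
    using integrable_continuous_real[OF assms(3)] by (simp add: has_integral_integral)
  from has_integral_affinity[OF this, of "- k" "b + k * t0"]
  have int: "((\<lambda>t. f (- k * t + (b + k * t0))) has_integral integral {a..b} f / k)
      ((\<lambda>x. (- 1 / k) * x + (b + k * t0) / k) ` {a..b})"
    using assms(1) by (simp add: divide_inverse_commute algebra_simps)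
  have "(\<lambda>x. (- 1 / k) * x + (b + k * t0) / k) ` {a..b}
      = {(- 1 / k) * b + (b + k * t0) / k .. (- 1 / k) * a + (b + k * t0) / k}"
    unfolding image_affinity_atLeastAtMost using assms(1,2) by auto
  also have "\<dots> = {t0..t0 + (b - a) / k}"
    using assms(1) by (intro arg_cong2[where f = atLeastAtMost]) (simp_all add: field_simps)
  finally have img: "(\<lambda>x. (- 1 / k) * x + (b + k * t0) / k) ` {a..b} = {t0..t0 + (b - a) / k}" .
  from int[unfolded img] show ?thesis
    by (simp add: algebra_simps)
qed

section \<open>Solutions of the CBF-SIR model\<close>

lemma compact_SS: "compact SS"
proof -
  have eq: "SS = ({0..1} \<times> {0..1}) \<inter> {p. fst p + snd p \<le> (1::real)}"
    by (auto simp: SS_def)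
  have "closed {p :: real \<times> real. fst p + snd p \<le> 1}"
    by (intro closed_Collect_le continuous_intros)
  then show ?thesis
    unfolding eq by (intro compact_Int_closed compact_Times compact_Icc)
qed

lemma convex_SS: "convex SS"
proof -
  have eq: "SS = {p. (-1, 0) \<bullet> p \<le> 0} \<inter> {p. (0, -1) \<bullet> p \<le> 0} \<inter> {p. (1, 1) \<bullet> p \<le> (1::real)}"
    by (auto simp: SS_def inner_Pair)
  show ?thesis
    unfolding eq by (intro convex_Int convex_halfspace_le)
qed

lemma C1_imp_lipschitz_on_compact_convex:
  fixes f :: "real \<times> real \<Rightarrow> real"
  assumes "compact K" "convex K"
    and der: "\<And>p. p \<in> K \<Longrightarrow> (f has_derivative (\<lambda>v. fx p * fst v + fy p * snd v)) (at p within K)"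
    and "continuous_on K fx" "continuous_on K fy"
  obtains L where "L-lipschitz_on K f"
proof -
  have "bounded ((\<lambda>p. \<bar>fx p\<bar> + \<bar>fy p\<bar>) ` K)"
    by (intro compact_imp_bounded compact_continuous_image continuous_intros assms)
  then obtain M where M: "\<And>p. p \<in> K \<Longrightarrow> \<bar>fx p\<bar> + \<bar>fy p\<bar> \<le> M"
    by (force simp: bounded_real)
  have "(max M 0)-lipschitz_on K f"
  proof (rule bounded_derivative_imp_lipschitz[OF der \<open>convex K\<close>])
    fix p assume "p \<in> K"
    show "onorm (\<lambda>v. fx p * fst v + fy p * snd v) \<le> max M 0"
    proof (rule onorm_le)
      fix v :: "real \<times> real"
      have "\<bar>fst v\<bar> \<le> norm v" "\<bar>snd v\<bar> \<le> norm v"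
        using norm_fst_le[of "fst v" "snd v"] norm_snd_le[of "snd v" "fst v"] by simp_all
      then have "\<bar>fx p * fst v + fy p * snd v\<bar> \<le> (\<bar>fx p\<bar> + \<bar>fy p\<bar>) * norm v"
        using abs_triangle_ineq[of "fx p * fst v" "fy p * snd v"]
          mult_left_mono[of "\<bar>fst v\<bar>" "norm v" "\<bar>fx p\<bar>"] mult_left_mono[of "\<bar>snd v\<bar>" "norm v" "\<bar>fy p\<bar>"]
        by (simp add: abs_mult distrib_right)
      also have "\<dots> \<le> max M 0 * norm v"
        using M[OF \<open>p \<in> K\<close>] by (intro mult_right_mono) auto
      finally show "norm (fx p * fst v + fy p * snd v) \<le> max M 0 * norm v"
        by simp
    qed
  next
    show "0 \<le> max M 0" by simp
  qed
  then show ?thesis by (rule that)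
qed

definition cbf_field :: "real \<Rightarrow> (real \<Rightarrow> real \<Rightarrow> real) \<Rightarrow> real \<Rightarrow> real \<times> real \<Rightarrow> real \<times> real" where
  "cbf_field \<gamma> \<beta> c p =
     (- (1 - c) * \<gamma> * Rn \<gamma> \<beta> (fst p) (snd p) * snd p,
      \<gamma> * ((1 - c) * Rn \<gamma> \<beta> (fst p) (snd p) - 1) * snd p)"

lemma cbf_solD:
  assumes "cbf_sol \<gamma> \<beta> u p z"
  shows "z 0 = p" "\<And>t. 0 \<le> t \<Longrightarrow> z t \<in> SS" "continuous_on {0..} z"
    "\<And>a b. 0 \<le> a \<Longrightarrow> continuous_on {a..b} z"
  using assms by (auto simp: cbf_sol_def intro: continuous_on_subset)

lemma cbf_sol_continuous_on_compose:
  assumes "cbf_sol \<gamma> \<beta> u p z" "continuous_on SS g"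
  shows "continuous_on {0..} (\<lambda>t. g (z t))"
  using continuous_on_compose2[OF assms(2) cbf_solD(3)[OF assms(1)]] cbf_solD(2)[OF assms(1)]
  by auto

lemma cbf_sol_derivative:
  assumes "cbf_sol \<gamma> \<beta> u p z" "0 \<le> a"
  obtains S where "finite S"
    "\<And>t. t \<in> {a<..<b} - S \<Longrightarrow> (z has_vector_derivative cbf_field \<gamma> \<beta> (u t) (z t)) (at t)"
proof -
  obtain F where "finite (F \<inter> {0..b})"
    and F: "\<forall>t\<in>{0<..} - F. (z has_vector_derivative cbf_field \<gamma> \<beta> (u t) (z t)) (at t)"
    using assms(1) by (auto simp: cbf_sol_def cbf_field_def)
  show ?thesis
  proof (rule that[of "F \<inter> {0..b}"])
    fix t assume "t \<in> {a<..<b} - F \<inter> {0..b}"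
    then have "t \<in> {0<..} - F"
      using assms(2) by auto
    then show "(z has_vector_derivative cbf_field \<gamma> \<beta> (u t) (z t)) (at t)"
      using F by blast
  qed fact
qed

lemma cbf_sol_shift:
  assumes sol: "cbf_sol \<gamma> \<beta> u p z" and "0 \<le> s"
  shows "cbf_sol \<gamma> \<beta> (\<lambda>t. u (t + s)) (z s) (\<lambda>t. z (t + s))"
proof -
  obtain F where F: "\<forall>b. finite (F \<inter> {0..b})"
    "\<forall>t\<in>{0<..} - F. (z has_vector_derivative cbf_field \<gamma> \<beta> (u t) (z t)) (at t)"
    using sol by (auto simp: cbf_sol_def cbf_field_def)
  have "finite ((\<lambda>t. t - s) ` F \<inter> {0..b})" for b
  proof -
    have "(\<lambda>t. t - s) ` F \<inter> {0..b} \<subseteq> (\<lambda>t. t - s) ` (F \<inter> {0..b + s})"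
      using \<open>0 \<le> s\<close> by auto
    then show ?thesis
      using F(1) finite_surj by blast
  qed
  moreover have "((\<lambda>t. z (t + s)) has_vector_derivative cbf_field \<gamma> \<beta> (u (t + s)) (z (t + s))) (at t)"
    if "t \<in> {0<..} - (\<lambda>t. t - s) ` F" for t
  proof -
    have "t + s \<in> {0<..} - F"
      using that \<open>0 \<le> s\<close> by (force simp: image_iff)
    then have "(z has_vector_derivative cbf_field \<gamma> \<beta> (u (t + s)) (z (t + s))) (at (t + s))"
      using F(2) by blast
    moreover have "((\<lambda>t. t + s) has_vector_derivative 1) (at t)"
      by (auto intro!: derivative_eq_intros)
    ultimately show ?thesis
      using vector_diff_chain_at[of "\<lambda>t. t + s" 1 t z] by (simp add: o_def)
  qed
  moreover have "continuous_on {0..} (\<lambda>t. z (t + s))"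
    using sol \<open>0 \<le> s\<close> unfolding cbf_sol_def
    by (auto intro!: continuous_on_compose2[of "{0..}" z] continuous_intros)
  ultimately show ?thesis
    using sol \<open>0 \<le> s\<close> unfolding cbf_sol_def cbf_field_def by (auto intro!: exI[of _ "(\<lambda>t. t - s) ` F"])
qed

lemma has_vector_derivative_fst:
  assumes "(z has_vector_derivative v) F"
  shows "((\<lambda>t. fst (z t)) has_real_derivative fst v) F"
  using has_derivative_fst[OF assms[unfolded has_vector_derivative_def]]
  by (simp add: has_field_derivative_def mult_commute_abs)

lemma has_vector_derivative_snd:
  assumes "(z has_vector_derivative v) F"
  shows "((\<lambda>t. snd (z t)) has_real_derivative snd v) F"
  using has_derivative_snd[OF assms[unfolded has_vector_derivative_def]]
  by (simp add: has_field_derivative_def mult_commute_abs)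

locale cbf_model =
  fixes \<gamma> :: real and \<beta> :: "real \<Rightarrow> real \<Rightarrow> real" and \<beta>x \<beta>y :: "real \<times> real \<Rightarrow> real"
  assumes gamma_pos: "0 < \<gamma>"
    and beta_pos: "\<And>x y. (x, y) \<in> SS \<Longrightarrow> 0 < \<beta> x y"
    and beta_derivative: "\<And>p. p \<in> SS \<Longrightarrow>
      ((\<lambda>q. \<beta> (fst q) (snd q)) has_derivative (\<lambda>v. \<beta>x p * fst v + \<beta>y p * snd v)) (at p)"
    and continuous_partials: "continuous_on SS \<beta>x" "continuous_on SS \<beta>y"
    and x_beta_increasing: "\<And>x y. (x, y) \<in> SS \<Longrightarrow> 0 < x * \<beta>x (x, y) + \<beta> x y"
begin

lemma continuous_on_beta: "continuous_on SS (\<lambda>p. \<beta> (fst p) (snd p))"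
  using beta_derivative has_derivative_continuous
  by (blast intro: continuous_at_imp_continuous_on)

lemma field_lipschitz:
  obtains L where "\<And>c. c \<in> {0..1} \<Longrightarrow> L-lipschitz_on SS (cbf_field \<gamma> \<beta> c)"
proof -
  define k where "k p = \<beta> (fst p) (snd p) * fst p * snd p" for p
  obtain K where K: "K-lipschitz_on SS k"
  proof (rule C1_imp_lipschitz_on_compact_convex[OF compact_SS convex_SS])
    fix p assume "p \<in> SS"
    show "(k has_derivative (\<lambda>v. (\<beta>x p * fst p * snd p + \<beta> (fst p) (snd p) * snd p) * fst v
                                 + (\<beta>y p * fst p * snd p + \<beta> (fst p) (snd p) * fst p) * snd v)) (at p within SS)"
      unfolding k_def
      by (rule has_derivative_at_withinI, rule has_derivative_eq_rhs)
        (auto intro!: derivative_eq_intros beta_derivative[OF \<open>p \<in> SS\<close>] simp: algebra_simps)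
  qed (use continuous_partials continuous_on_beta in \<open>auto intro!: continuous_intros\<close>)
  have snd: "1-lipschitz_on SS snd"
    by (rule lipschitz_onI) (auto simp: dist_snd_le)
  have field: "cbf_field \<gamma> \<beta> c p = (- (1 - c) * k p, (1 - c) * k p - \<gamma> * snd p)" for c p
    using gamma_pos by (simp add: cbf_field_def Rn_def k_def field_simps)
  have "(sqrt ((1 * K)\<^sup>2 + (1 * K + \<gamma> * 1)\<^sup>2))-lipschitz_on SS (cbf_field \<gamma> \<beta> c)"
    if "c \<in> {0..1}" for c
    unfolding field using that gamma_pos
    by (intro lipschitz_on_Pair lipschitz_on_diff lipschitz_on_cmult_real_upper K snd) auto
  then show ?thesis by (rule that)
qed

lemma solutions_agree:
  fixes z w :: "real \<Rightarrow> real \<times> real"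
  assumes S: "finite S" and "a \<le> b"
    and cont: "continuous_on {a..b} z" "continuous_on {a..b} w"
    and SS: "\<And>t. t \<in> {a..b} \<Longrightarrow> z t \<in> SS" "\<And>t. t \<in> {a..b} \<Longrightarrow> w t \<in> SS"
    and der: "\<And>t. t \<in> {a<..<b} - S \<Longrightarrow> (z has_vector_derivative cbf_field \<gamma> \<beta> (u t) (z t)) (at t)"
      "\<And>t. t \<in> {a<..<b} - S \<Longrightarrow> (w has_vector_derivative cbf_field \<gamma> \<beta> (u t) (w t)) (at t)"
    and u: "\<And>t. t \<in> {a<..<b} \<Longrightarrow> u t \<in> {0..1}"
    and "z a = w a"
  shows "z b = w b"
proof -
  obtain L where L: "\<And>c. c \<in> {0..1} \<Longrightarrow> L-lipschitz_on SS (cbf_field \<gamma> \<beta> c)"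
    using field_lipschitz by blast
  have "(\<lambda>t. z t - w t) b = 0"
  proof (rule vanishes_if_derivative_linearly_bounded[OF S \<open>a \<le> b\<close>])
    show "continuous_on {a..b} (\<lambda>t. z t - w t)"
      using cont by (intro continuous_intros)
    fix t assume t: "t \<in> {a<..<b} - S"
    show "((\<lambda>t. z t - w t) has_vector_derivative
        cbf_field \<gamma> \<beta> (u t) (z t) - cbf_field \<gamma> \<beta> (u t) (w t)) (at t)"
      by (intro derivative_intros der t)
    show "norm (cbf_field \<gamma> \<beta> (u t) (z t) - cbf_field \<gamma> \<beta> (u t) (w t)) \<le> L * norm (z t - w t)"
      using t by (intro lipschitz_on_normD[OF L] u SS) auto
  qed (use \<open>z a = w a\<close> in simp)
  then show ?thesis by simp
qed

lemma cbf_sol_unique: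
  assumes sol1: "cbf_sol \<gamma> \<beta> u1 p z1" and sol2: "cbf_sol \<gamma> \<beta> u2 p z2" and "0 \<le> b"
    and u: "\<And>t. t \<in> {0<..<b} \<Longrightarrow> u1 t = u2 t \<and> u1 t \<in> {0..1}"
  shows "z1 b = z2 b"
proof -
  obtain S1 where S1: "finite S1"
    "\<And>t. t \<in> {0<..<b} - S1 \<Longrightarrow> (z1 has_vector_derivative cbf_field \<gamma> \<beta> (u1 t) (z1 t)) (at t)"
    using cbf_sol_derivative[OF sol1 order.refl] by blast
  obtain S2 where S2: "finite S2"
    "\<And>t. t \<in> {0<..<b} - S2 \<Longrightarrow> (z2 has_vector_derivative cbf_field \<gamma> \<beta> (u2 t) (z2 t)) (at t)"
    using cbf_sol_derivative[OF sol2 order.refl] by blast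
  show ?thesis
  proof (rule solutions_agree[of "S1 \<union> S2" 0 b z1 z2 u1])
    fix t assume "t \<in> {0<..<b} - (S1 \<union> S2)"
    then show "(z1 has_vector_derivative cbf_field \<gamma> \<beta> (u1 t) (z1 t)) (at t)"
      "(z2 has_vector_derivative cbf_field \<gamma> \<beta> (u1 t) (z2 t)) (at t)"
      using S1(2)[of t] S2(2)[of t] u[of t] by auto
  next
    show "continuous_on {0..b} z1" "continuous_on {0..b} z2"
      using cbf_solD(4)[OF sol1] cbf_solD(4)[OF sol2] by auto
    show "z1 0 = z2 0"
      using cbf_solD(1)[OF sol1] cbf_solD(1)[OF sol2] by simp
    show "\<And>t. t \<in> {0<..<b} \<Longrightarrow> u1 t \<in> {0..1}"
      using u by blast
  qed (use S1(1) S2(1) \<open>0 \<le> b\<close> cbf_solD(2)[OF sol1] cbf_solD(2)[OF sol2] in auto)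
qed

abbreviation R :: "real \<times> real \<Rightarrow> real" where
  "R q \<equiv> Rn \<gamma> \<beta> (fst q) (snd q)"

lemma Rn_nonneg: "(x, y) \<in> SS \<Longrightarrow> 0 \<le> Rn \<gamma> \<beta> x y"
  using beta_pos[of x y] gamma_pos by (auto simp: Rn_def SS_def)

lemma continuous_on_R: "continuous_on SS R"
  unfolding Rn_def using gamma_pos continuous_on_beta by (intro continuous_intros) auto

text \<open>\<open>y' \<ge> - \<gamma> y\<close>, so \<open>exp (\<gamma> t) y\<close> is nondecreasing.\<close>
lemma snd_cbf_sol_pos:
  assumes sol: "cbf_sol \<gamma> \<beta> u p z" and u: "\<And>t. 0 < t \<Longrightarrow> u t \<le> 1"
    and "0 < snd p" "0 \<le> t"
  shows "0 < snd (z t)"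
proof -
  define g where "g t = exp (\<gamma> * t) * snd (z t)" for t
  obtain S where S: "finite S"
    "\<And>r. r \<in> {0<..<t} - S \<Longrightarrow> (z has_vector_derivative cbf_field \<gamma> \<beta> (u r) (z r)) (at r)"
    using cbf_sol_derivative[OF sol order.refl] by blast
  have "g 0 \<le> g t"
  proof (rule DERIV_nonneg_imp_nondecreasing_finite[OF S(1) \<open>0 \<le> t\<close>])
    show "continuous_on {0..t} g"
      unfolding g_def using cbf_solD(4)[OF sol order.refl] by (intro continuous_intros)
    fix r assume r: "r \<in> {0<..<t} - S"
    show "(g has_real_derivative
        exp (\<gamma> * r) * \<gamma> * snd (z r) + exp (\<gamma> * r) * snd (cbf_field \<gamma> \<beta> (u r) (z r))) (at r)"
      unfolding g_def by (auto intro!: derivative_eq_intros has_vector_derivative_snd S(2) r)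
    have "z r \<in> SS"
      using cbf_solD(2)[OF sol] r by auto
    then have "0 \<le> R (z r)" "0 \<le> snd (z r)"
      using Rn_nonneg[of "fst (z r)" "snd (z r)"] by (auto simp: SS_def split: prod.splits)
    moreover have "0 \<le> 1 - u r"
      using u[of r] r by auto
    ultimately have "0 \<le> exp (\<gamma> * r) * \<gamma> * ((1 - u r) * R (z r) * snd (z r))"
      using gamma_pos by simp
    then show "0 \<le> exp (\<gamma> * r) * \<gamma> * snd (z r) + exp (\<gamma> * r) * snd (cbf_field \<gamma> \<beta> (u r) (z r))"
      by (simp add: cbf_field_def algebra_simps)
  qed
  then have "0 < g t"
    using \<open>0 < snd p\<close> cbf_solD(1)[OF sol] by (simp add: g_def)
  then show ?thesis
    by (simp add: g_def zero_less_mult_iff)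
qed

lemma beta_partial_x:
  assumes "(x, y) \<in> SS"
  shows "((\<lambda>x. \<beta> x y) has_real_derivative \<beta>x (x, y)) (at x)"
proof -
  have "((\<lambda>x. (x, y)) has_derivative (\<lambda>h. (h, 0))) (at x)"
    by (auto intro!: derivative_eq_intros)
  from diff_chain_at[OF this beta_derivative[OF assms]] show ?thesis
    by (simp add: has_field_derivative_def o_def mult_commute_abs)
qed

lemma Rn_strict_mono_x:
  assumes "(x1, y) \<in> SS" "(x2, y) \<in> SS" "x1 < x2"
  shows "Rn \<gamma> \<beta> x1 y < Rn \<gamma> \<beta> x2 y"
proof -
  have "\<beta> x1 y * x1 < \<beta> x2 y * x2"
  proof (rule DERIV_pos_imp_increasing[OF \<open>x1 < x2\<close>])
    fix x assume "x1 \<le> x" "x \<le> x2"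
    then have "(x, y) \<in> SS"
      using assms by (auto simp: SS_def)
    then show "\<exists>d. ((\<lambda>x. \<beta> x y * x) has_real_derivative d) (at x) \<and> 0 < d"
      using DERIV_mult[OF beta_partial_x DERIV_ident] x_beta_increasing by (force simp: mult.commute)
  qed
  then show ?thesis
    using gamma_pos by (simp add: Rn_def divide_strict_right_mono)
qed

definition Rn_deriv :: "real \<times> real \<Rightarrow> real \<times> real \<Rightarrow> real" where
  "Rn_deriv p v = ((\<beta>x p * fst v + \<beta>y p * snd v) * fst p + \<beta> (fst p) (snd p) * fst v) / \<gamma>"

lemma R_has_derivative_along:
  assumes "(z has_vector_derivative v) (at t)" "z t \<in> SS"
  shows "((\<lambda>t. R (z t)) has_real_derivative Rn_deriv (z t) v) (at t)"
proof -
  have "((\<lambda>q. \<beta> (fst q) (snd q)) \<circ> z has_derivative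
      (\<lambda>w. \<beta>x (z t) * fst w + \<beta>y (z t) * snd w) \<circ> (\<lambda>h. h *\<^sub>R v)) (at t)"
    using assms by (intro diff_chain_at beta_derivative) (simp_all add: has_vector_derivative_def)
  moreover have "(\<lambda>w. \<beta>x (z t) * fst w + \<beta>y (z t) * snd w) \<circ> (\<lambda>h. h *\<^sub>R v)
      = (*) (\<beta>x (z t) * fst v + \<beta>y (z t) * snd v)"
    by (rule ext) (simp add: algebra_simps)
  ultimately have "((\<lambda>t. \<beta> (fst (z t)) (snd (z t))) has_real_derivative \<beta>x (z t) * fst v + \<beta>y (z t) * snd v) (at t)"
    by (simp add: has_field_derivative_def comp_def)
  then show ?thesis
    using gamma_pos unfolding Rn_def Rn_deriv_def
    by (auto intro!: derivative_eq_intros has_vector_derivative_fst assms(1) simp: field_simps)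
qed

lemma Rn_deriv_field_continuous: "continuous_on SS (\<lambda>p. Rn_deriv p (cbf_field \<gamma> \<beta> 0 p))"
  unfolding Rn_deriv_def cbf_field_def Rn_def
  using gamma_pos continuous_on_beta continuous_partials by (intro continuous_intros) auto

text \<open>At \<open>R = 1\<close> the flow is horizontal and points towards smaller \<open>x\<close>, where \<open>R\<close> is smaller
  by Assumption 1.\<close>
lemma Rn_deriv_field_neg:
  assumes "p \<in> SS" "0 < snd p" "R p = 1"
  shows "Rn_deriv p (cbf_field \<gamma> \<beta> 0 p) < 0"
proof -
  have "cbf_field \<gamma> \<beta> 0 p = (- \<gamma> * snd p, 0)"
    using assms(3) by (simp add: cbf_field_def)
  then have "Rn_deriv p (cbf_field \<gamma> \<beta> 0 p) = - snd p * (fst p * \<beta>x p + \<beta> (fst p) (snd p))"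
    using gamma_pos by (simp add: Rn_deriv_def field_simps)
  moreover have "0 < fst p * \<beta>x p + \<beta> (fst p) (snd p)"
    using x_beta_increasing[of "fst p" "snd p"] assms(1) by simp
  ultimately show ?thesis
    using assms(2) by (simp add: mult_pos_pos)
qed

lemma R_below_one_persists:
  assumes sol: "cbf_sol \<gamma> \<beta> (\<lambda>_. 0) p z" and "0 < snd p"
    and "0 \<le> t0" "R (z t0) \<le> 1" "t0 < t"
  shows "R (z t) < 1"
proof (rule below_level_persists[where f = "\<lambda>t. R (z t)" and f' = "\<lambda>t. Rn_deriv (z t) (cbf_field \<gamma> \<beta> 0 (z t))"])
  show "continuous_on {0..} (\<lambda>t. R (z t))"
    by (rule cbf_sol_continuous_on_compose[OF sol continuous_on_R])
  show "continuous_on {0..} (\<lambda>t. Rn_deriv (z t) (cbf_field \<gamma> \<beta> 0 (z t)))"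
    by (rule cbf_sol_continuous_on_compose[OF sol Rn_deriv_field_continuous])
  fix b :: real
  obtain S where "finite S"
    "\<And>t. t \<in> {0<..<b} - S \<Longrightarrow> (z has_vector_derivative cbf_field \<gamma> \<beta> 0 (z t)) (at t)"
    using cbf_sol_derivative[OF sol order.refl] by blast
  then show "\<exists>S. finite S \<and> (\<forall>t\<in>{0<..<b} - S.
      ((\<lambda>t. R (z t)) has_real_derivative Rn_deriv (z t) (cbf_field \<gamma> \<beta> 0 (z t))) (at t))"
    using cbf_solD(2)[OF sol] by (force intro!: R_has_derivative_along)
next
  fix s :: real assume "0 \<le> s" "R (z s) = 1"
  then show "Rn_deriv (z s) (cbf_field \<gamma> \<beta> 0 (z s)) < 0"
    using cbf_solD(2)[OF sol] snd_cbf_sol_pos[OF sol _ \<open>0 < snd p\<close>]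
    by (intro Rn_deriv_field_neg) auto
qed (use assms in auto)

end

section \<open>The uncontrolled flow\<close>

locale cbf_flow = cbf_model +
  fixes phi :: "real \<Rightarrow> real \<times> real \<Rightarrow> real \<times> real"
  assumes flow_sol: "\<And>p. p \<in> SS \<Longrightarrow> cbf_sol \<gamma> \<beta> (\<lambda>_. 0) p (\<lambda>t. phi t p)"
begin

lemma flow_in_SS: "p \<in> SS \<Longrightarrow> 0 \<le> t \<Longrightarrow> phi t p \<in> SS"
  using cbf_solD(2)[OF flow_sol] by blast

lemma flow_0: "p \<in> SS \<Longrightarrow> phi 0 p = p"
  using cbf_solD(1)[OF flow_sol] by blast

lemma flow_continuous_on: "p \<in> SS \<Longrightarrow> continuous_on SS g \<Longrightarrow> continuous_on {0..} (\<lambda>t. g (phi t p))"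
  using cbf_sol_continuous_on_compose[OF flow_sol] by blast

lemma flow_add:
  assumes "p \<in> SS" "0 \<le> s" "0 \<le> t"
  shows "phi t (phi s p) = phi (t + s) p"
  using cbf_sol_unique[OF flow_sol[OF flow_in_SS[OF assms(1,2)]]
      cbf_sol_shift[OF flow_sol[OF assms(1)] assms(2)] assms(3)]
  by simp

lemma flow_fixed_on_axis:
  assumes "p \<in> SS" "snd p = 0" "0 \<le> t"
  shows "phi t p = p"
proof -
  have "cbf_sol \<gamma> \<beta> (\<lambda>_. 0) p (\<lambda>_. p)"
    using assms(1,2) unfolding cbf_sol_def
    by (auto intro!: exI[of _ "{}"] simp: zero_prod_def[symmetric])
  from cbf_sol_unique[OF flow_sol[OF assms(1)] this assms(3)] show ?thesis
    by simp
qed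

lemma flow_derivatives:
  assumes "p \<in> SS" "0 \<le> a"
  obtains S where "finite S"
    "\<And>t. t \<in> {a<..<b} - S \<Longrightarrow>
      ((\<lambda>t. fst (phi t p)) has_real_derivative - \<gamma> * R (phi t p) * snd (phi t p)) (at t)"
    "\<And>t. t \<in> {a<..<b} - S \<Longrightarrow>
      ((\<lambda>t. snd (phi t p)) has_real_derivative \<gamma> * (R (phi t p) - 1) * snd (phi t p)) (at t)"
proof -
  obtain S where "finite S" and S: "\<And>t. t \<in> {a<..<b} - S \<Longrightarrow>
      ((\<lambda>t. phi t p) has_vector_derivative cbf_field \<gamma> \<beta> 0 (phi t p)) (at t)"
    using cbf_sol_derivative[OF flow_sol[OF assms(1)] assms(2)] by blast
  then show ?thesis
    using that has_vector_derivative_fst[OF S] has_vector_derivative_snd[OF S]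
    by (simp add: cbf_field_def)
qed

lemma snd_flow_increasing:
  assumes "p \<in> SS" "0 < snd p" "0 \<le> a" "a < b" "\<And>r. a < r \<Longrightarrow> r < b \<Longrightarrow> 1 < R (phi r p)"
  shows "snd (phi a p) < snd (phi b p)"
proof -
  obtain S where S: "finite S" "\<And>t. t \<in> {a<..<b} - S \<Longrightarrow>
      ((\<lambda>t. snd (phi t p)) has_real_derivative \<gamma> * (R (phi t p) - 1) * snd (phi t p)) (at t)"
    using flow_derivatives[OF assms(1,3)] by metis
  show ?thesis
  proof (rule DERIV_pos_imp_increasing_finite[OF S(1) \<open>a < b\<close> _ S(2)])
    show "continuous_on {a..b} (\<lambda>t. snd (phi t p))"
      using cbf_solD(4)[OF flow_sol[OF assms(1)] assms(3)] by (intro continuous_intros)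
    fix t assume "t \<in> {a<..<b} - S"
    then show "0 < \<gamma> * (R (phi t p) - 1) * snd (phi t p)"
      using assms(3,5) snd_cbf_sol_pos[OF flow_sol[OF assms(1)] _ assms(2)] gamma_pos by auto
  qed
qed

lemma snd_flow_decreasing:
  assumes "p \<in> SS" "0 < snd p" "0 \<le> a" "a < b" "\<And>r. a < r \<Longrightarrow> r < b \<Longrightarrow> R (phi r p) < 1"
  shows "snd (phi b p) < snd (phi a p)"
proof -
  obtain S where S: "finite S" "\<And>t. t \<in> {a<..<b} - S \<Longrightarrow>
      ((\<lambda>t. snd (phi t p)) has_real_derivative \<gamma> * (R (phi t p) - 1) * snd (phi t p)) (at t)"
    using flow_derivatives[OF assms(1,3)] by metis
  have "- snd (phi a p) < - snd (phi b p)"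
  proof (rule DERIV_pos_imp_increasing_finite[OF S(1) \<open>a < b\<close>])
    show "continuous_on {a..b} (\<lambda>t. - snd (phi t p))"
      using cbf_solD(4)[OF flow_sol[OF assms(1)] assms(3)] by (intro continuous_intros)
    fix t assume t: "t \<in> {a<..<b} - S"
    then show "((\<lambda>t. - snd (phi t p)) has_real_derivative - (\<gamma> * (R (phi t p) - 1) * snd (phi t p))) (at t)"
      by (intro DERIV_minus S(2))
    have "0 < snd (phi t p)"
      using t assms(3) snd_cbf_sol_pos[OF flow_sol[OF assms(1)] _ assms(2)] by auto
    then show "0 < - (\<gamma> * (R (phi t p) - 1) * snd (phi t p))"
      using t assms(5) gamma_pos by (simp add: mult_pos_neg mult_neg_pos)
  qed
  then show ?thesis by simp
qed

lemma flow_first_arrival: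
  assumes "p \<in> SS" "snd p \<le> y" "0 \<le> t" "y \<le> snd (phi t p)"
  obtains a where "0 \<le> a" "a \<le> t" "snd (phi a p) = y" "\<And>r. 0 \<le> r \<Longrightarrow> r < a \<Longrightarrow> snd (phi r p) < y"
proof (cases "snd p = y")
  case True
  then show ?thesis
    using that[of 0] assms(3) flow_0[OF assms(1)] by auto
next
  case False
  have "continuous_on {0..t} (\<lambda>t. snd (phi t p))"
    using cbf_solD(4)[OF flow_sol[OF assms(1)] order.refl] by (intro continuous_intros)
  then obtain a where "0 < a" "a \<le> t" "snd (phi a p) = y" "\<And>r. 0 \<le> r \<Longrightarrow> r < a \<Longrightarrow> snd (phi r p) < y"
    using first_level_crossing[of 0 t "\<lambda>t. snd (phi t p)" y] assms False flow_0[OF assms(1)]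
    by auto
  then show ?thesis
    using that[of a] by auto
qed

text \<open>While \<open>R > 1\<close> the infected fraction grows, so \<open>x\<close> would decrease at the constant rate
  \<open>\<gamma> y\<^sub>0\<close> and become negative.\<close>
lemma R_flow_eventually_le_one:
  assumes "p \<in> SS" "0 < snd p"
  shows "\<exists>t\<ge>0. R (phi t p) \<le> 1"
proof (rule ccontr)
  assume "\<not> ?thesis"
  then have R_gt: "\<And>t. 0 \<le> t \<Longrightarrow> 1 < R (phi t p)"
    by force
  have y_ge: "snd p \<le> snd (phi t p)" if "0 \<le> t" for t
    using snd_flow_increasing[OF assms order.refl, of t] R_gt flow_0[OF assms(1)] that
    by (cases "t = 0") auto
  define tb where "tb = fst p / (\<gamma> * snd p) + 1"
  have "0 \<le> tb"
    using assms gamma_pos by (auto simp: tb_def SS_def)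
  obtain S where S: "finite S" "\<And>t. t \<in> {0<..<tb} - S \<Longrightarrow>
      ((\<lambda>t. fst (phi t p)) has_real_derivative - \<gamma> * R (phi t p) * snd (phi t p)) (at t)"
    using flow_derivatives[OF assms(1) order.refl] by metis
  have "(\<lambda>t. - fst (phi t p) - \<gamma> * snd p * t) 0 \<le> (\<lambda>t. - fst (phi t p) - \<gamma> * snd p * t) tb"
  proof (rule DERIV_nonneg_imp_nondecreasing_finite[OF S(1) \<open>0 \<le> tb\<close>])
    show "continuous_on {0..tb} (\<lambda>t. - fst (phi t p) - \<gamma> * snd p * t)"
      using cbf_solD(4)[OF flow_sol[OF assms(1)] order.refl] by (intro continuous_intros)
    fix t assume t: "t \<in> {0<..<tb} - S"
    then show "((\<lambda>t. - fst (phi t p) - \<gamma> * snd p * t) has_real_derivative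
        - (- \<gamma> * R (phi t p) * snd (phi t p)) - \<gamma> * snd p * 1) (at t)"
      by (intro DERIV_diff DERIV_minus S(2) DERIV_cmult DERIV_ident)
    have "snd (phi t p) < R (phi t p) * snd (phi t p)"
      using R_gt[of t] snd_cbf_sol_pos[OF flow_sol[OF assms(1)] _ assms(2), of t] t by auto
    then have "snd p \<le> R (phi t p) * snd (phi t p)"
      using y_ge[of t] t by auto
    then show "0 \<le> - (- \<gamma> * R (phi t p) * snd (phi t p)) - \<gamma> * snd p * 1"
      using gamma_pos by (simp add: mult.assoc)
  qed
  then have "fst (phi tb p) \<le> fst p - \<gamma> * snd p * tb"
    using flow_0[OF assms(1)] by simp
  also have "\<dots> < 0"
    using gamma_pos assms(2) by (simp add: tb_def field_simps)
  finally show False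
    using flow_in_SS[OF assms(1) \<open>0 \<le> tb\<close>] by (auto simp: SS_def split: prod.splits)
qed

lemma first_time_R_one:
  assumes "p \<in> SS" "0 < snd p" "1 < R p"
  obtains t1 where "0 < t1" "R (phi t1 p) = 1" "\<And>r. 0 \<le> r \<Longrightarrow> r < t1 \<Longrightarrow> 1 < R (phi r p)"
proof -
  obtain tb where "0 \<le> tb" "R (phi tb p) \<le> 1"
    using R_flow_eventually_le_one[OF assms(1,2)] by blast
  moreover have "continuous_on {0..tb} (\<lambda>t. - R (phi t p))"
    using flow_continuous_on[OF assms(1) continuous_on_R]
    by (intro continuous_intros) (auto intro: continuous_on_subset)
  ultimately obtain t1 where "0 < t1" "- R (phi t1 p) = - 1"
      "\<And>r. 0 \<le> r \<Longrightarrow> r < t1 \<Longrightarrow> - R (phi r p) < - 1"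
    using first_level_crossing[of 0 tb "\<lambda>t. - R (phi t p)" "- 1"] assms(3) flow_0[OF assms(1)]
    by auto
  then show ?thesis
    using that[of t1] by auto
qed

end

section \<open>The separatrix through \<open>(xbar, ybar)\<close>\<close>

locale cbf_separatrix = cbf_flow +
  fixes xbar ybar yhat :: real and lam :: "real \<Rightarrow> real"
  assumes bar_in_SS: "(xbar, ybar) \<in> SS" and R_bar: "Rn \<gamma> \<beta> xbar ybar = 1"
    and ybar_pos: "0 < ybar" and yhat: "0 \<le> yhat" "yhat \<le> ybar"
    and continuous_lam: "continuous_on {yhat..ybar} lam"
    and closure_Gamma_minus:
      "closure (Gamma_minus phi (xbar, ybar)) = {(lam y, y) | y. yhat \<le> y \<and> y \<le> ybar}"
begin

abbreviation Gamma_bar :: "(real \<times> real) set" where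
  "Gamma_bar \<equiv> Gamma_minus phi (xbar, ybar)"

lemma Gamma_bar_R_ge_one:
  assumes "p \<in> Gamma_bar"
  shows "0 < snd p" "1 \<le> R p"
proof -
  obtain t where t: "0 \<le> t" "phi t p = (xbar, ybar)" and "p \<in> SS"
    using assms by (auto simp: Gamma_minus_def)
  show pos: "0 < snd p"
  proof (rule ccontr)
    assume "\<not> 0 < snd p"
    then have "snd p = 0"
      using \<open>p \<in> SS\<close> by (auto simp: SS_def split: prod.splits)
    then show False
      using flow_fixed_on_axis[OF \<open>p \<in> SS\<close> _ t(1)] t(2) ybar_pos by auto
  qed
  show "1 \<le> R p"
  proof (rule ccontr)
    assume "\<not> 1 \<le> R p"
    then have "0 < t"
      using t flow_0[OF \<open>p \<in> SS\<close>] R_bar by (cases "t = 0") auto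
    then have "R (phi t p) < 1"
      using R_below_one_persists[OF flow_sol[OF \<open>p \<in> SS\<close>] pos order.refl] \<open>\<not> 1 \<le> R p\<close>
        flow_0[OF \<open>p \<in> SS\<close>] by auto
    then show False
      using t(2) R_bar by simp
  qed
qed

lemma separatrix_in_SS_R_ge_one:
  assumes "yhat \<le> y" "y \<le> ybar"
  shows "(lam y, y) \<in> SS" "1 \<le> Rn \<gamma> \<beta> (lam y) y"
proof -
  have "closed (SS \<inter> R -` {1..})"
    by (rule continuous_closed_preimage[OF continuous_on_R]) (auto simp: compact_SS compact_imp_closed)
  moreover have "Gamma_bar \<subseteq> SS \<inter> R -` {1..}"
  proof
    fix p assume p: "p \<in> Gamma_bar"
    then have "p \<in> SS"
      by (simp add: Gamma_minus_def)
    with Gamma_bar_R_ge_one(2)[OF p] show "p \<in> SS \<inter> R -` {1..}"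
      by simp
  qed
  ultimately have "closure Gamma_bar \<subseteq> SS \<inter> R -` {1..}"
    by (rule closure_minimal[rotated])
  then show "(lam y, y) \<in> SS" "1 \<le> Rn \<gamma> \<beta> (lam y) y"
    using closure_Gamma_minus assms by auto
qed

lemma Gamma_bar_on_separatrix:
  assumes "p \<in> Gamma_bar"
  shows "fst p = lam (snd p)" "yhat \<le> snd p" "snd p \<le> ybar"
  using closure_subset[of Gamma_bar] assms closure_Gamma_minus by auto

lemma Gamma_bar_if_flow_reaches:
  assumes "p \<in> SS" "0 \<le> s" "phi s p \<in> Gamma_bar"
  shows "p \<in> Gamma_bar"
proof -
  obtain t where "0 \<le> t" "phi t (phi s p) = (xbar, ybar)"
    using assms(3) by (auto simp: Gamma_minus_def)
  then show ?thesis
    using assms(1,2) flow_add[OF assms(1,2)] by (auto simp: Gamma_minus_def intro!: exI[of _ "t + s"])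
qed

text \<open>Points of \<open>\<Gamma>\<^sup>-\<close> below height \<open>y\<close> lie arbitrarily close to the curve; their orbits
  cross height \<open>y\<close> on the way to \<open>(xbar, ybar)\<close>, and the crossing point lies on the curve.\<close>
lemma separatrix_in_Gamma_bar:
  assumes "yhat < y" "y \<le> ybar"
  shows "(lam y, y) \<in> Gamma_bar"
proof -
  define y' where "y' = (yhat + y) / 2"
  have "(lam y', y') \<in> closure Gamma_bar"
    using closure_Gamma_minus assms by (auto simp: y'_def)
  then obtain g where g: "g \<in> Gamma_bar" "dist g (lam y', y') < (y - yhat) / 2"
    using assms(1) unfolding closure_approachable by (metis diff_gt_0_iff_gt half_gt_zero)
  have "\<bar>snd g - y'\<bar> \<le> dist g (lam y', y')"
    using dist_snd_le[of g "(lam y', y')"] by (simp add: dist_real_def)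
  then have "snd g < y"
    using g(2) by (simp add: y'_def field_simps abs_less_iff)
  obtain s where s: "0 \<le> s" "phi s g = (xbar, ybar)" and "g \<in> SS"
    using g(1) by (auto simp: Gamma_minus_def)
  have "continuous_on {0..s} (\<lambda>t. snd (phi t g))"
    using cbf_solD(4)[OF flow_sol[OF \<open>g \<in> SS\<close>] order.refl] by (intro continuous_intros)
  then obtain t where t: "0 \<le> t" "t \<le> s" "snd (phi t g) = y"
    using IVT'[of "\<lambda>t. snd (phi t g)" 0 y s] \<open>snd g < y\<close> assms s flow_0[OF \<open>g \<in> SS\<close>] by auto
  have "phi (s - t) (phi t g) = (xbar, ybar)"
    using flow_add[OF \<open>g \<in> SS\<close> t(1), of "s - t"] t s by simp
  then have "phi t g \<in> Gamma_bar"
    using flow_in_SS[OF \<open>g \<in> SS\<close> t(1)] t by (auto simp: Gamma_minus_def intro!: exI[of _ "s - t"])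
  moreover have "phi t g = (lam y, y)"
    using Gamma_bar_on_separatrix(1)[OF calculation] t(3) by (metis prod.collapse)
  ultimately show ?thesis by simp
qed

lemma R_one_on_level_ybar:
  assumes "(x, ybar) \<in> SS" "Rn \<gamma> \<beta> x ybar = 1"
  shows "x = xbar"
  using Rn_strict_mono_x[OF assms(1) bar_in_SS] Rn_strict_mono_x[OF bar_in_SS assms(1)] assms(2) R_bar
  by (cases x xbar rule: linorder_cases) auto

lemma xbar_pos: "0 < xbar"
  using R_bar bar_in_SS by (cases "xbar = 0") (auto simp: Rn_def SS_def)

lemma rho_on_level_ybar:
  assumes "xbar \<le> x" "(x, ybar) \<in> SS"
  shows "0 \<le> rho \<gamma> \<beta> x ybar" "rho \<gamma> \<beta> x ybar \<le> 1" "(1 - rho \<gamma> \<beta> x ybar) * Rn \<gamma> \<beta> x ybar = 1"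
proof -
  have "1 \<le> Rn \<gamma> \<beta> x ybar"
    using Rn_strict_mono_x[OF bar_in_SS assms(2)] assms(1) R_bar by (cases "x = xbar") auto
  moreover have "rho \<gamma> \<beta> x ybar = 1 - 1 / Rn \<gamma> \<beta> x ybar"
    using beta_pos[OF assms(2)] xbar_pos assms(1) gamma_pos by (simp add: rho_def Rn_def)
  ultimately show "0 \<le> rho \<gamma> \<beta> x ybar" "rho \<gamma> \<beta> x ybar \<le> 1" "(1 - rho \<gamma> \<beta> x ybar) * Rn \<gamma> \<beta> x ybar = 1"
    by simp_all
qed

lemma D_plus_R_gt_one:
  assumes "p \<in> D_plus ybar yhat lam"
  shows "1 < R p"
proof -
  have p: "p \<in> SS" "yhat \<le> snd p" "snd p \<le> ybar" "lam (snd p) < fst p"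
    using assms by (auto simp: D_plus_def)
  then have "Rn \<gamma> \<beta> (lam (snd p)) (snd p) < R p"
    using separatrix_in_SS_R_ge_one(1) by (intro Rn_strict_mono_x) auto
  then show ?thesis
    using separatrix_in_SS_R_ge_one(2)[OF p(2,3)] by simp
qed

lemma D_plus_not_Gamma_bar: "p \<in> D_plus ybar yhat lam \<Longrightarrow> p \<notin> Gamma_bar"
  using Gamma_bar_on_separatrix(1) by (force simp: D_plus_def)

text \<open>Otherwise the orbit, which rises while \<open>R > 1\<close>, would meet the curve \<open>x = lam y\<close> below
  \<open>ybar\<close>, and \<open>p\<close> would lie on \<open>\<Gamma>\<^sup>-\<close>.\<close>
lemma D_plus_reaches_ybar:
  assumes p: "p \<in> D_plus ybar yhat lam"
    and t1: "0 < t1" "R (phi t1 p) = 1" "\<And>r. 0 \<le> r \<Longrightarrow> r < t1 \<Longrightarrow> 1 < R (phi r p)"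
  shows "ybar \<le> snd (phi t1 p)"
proof (rule ccontr)
  assume below: "\<not> ybar \<le> snd (phi t1 p)"
  have pS: "p \<in> SS" "0 < snd p" "yhat \<le> snd p" "lam (snd p) < fst p"
    using p by (auto simp: D_plus_def)
  have rising: "snd (phi a p) < snd (phi b p)" if "0 \<le> a" "a < b" "b \<le> t1" for a b
    using that t1(3) by (intro snd_flow_increasing[OF pS(1,2)]) auto
  have height: "snd (phi t p) \<in> {yhat..ybar}" if "t \<in> {0..t1}" for t
    using rising[of 0 t] rising[of t t1] that pS below flow_0[OF pS(1)]
    by (cases "t = 0"; cases "t = t1") auto
  define D where "D t = fst (phi t p) - lam (snd (phi t p))" for t
  have "continuous_on {0..t1} D"
    unfolding D_def using cbf_solD(4)[OF flow_sol[OF pS(1)] order.refl, of t1] height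
    by (intro continuous_intros continuous_on_compose2[OF continuous_lam]) auto
  moreover have "0 < D 0"
    using pS flow_0[OF pS(1)] by (simp add: D_def)
  moreover have "D t1 \<le> 0"
  proof (rule ccontr)
    assume "\<not> D t1 \<le> 0"
    then have "Rn \<gamma> \<beta> (lam (snd (phi t1 p))) (snd (phi t1 p)) < R (phi t1 p)"
      using height[of t1] t1(1) separatrix_in_SS_R_ge_one(1) flow_in_SS[OF pS(1), of t1]
      by (intro Rn_strict_mono_x) (auto simp: D_def)
    then show False
      using separatrix_in_SS_R_ge_one(2) height[of t1] t1 by force
  qed
  ultimately obtain s where s: "0 \<le> s" "s \<le> t1" "D s = 0"
    using IVT2'[of D t1 0 0] t1(1) by auto
  then have "0 < s"
    using \<open>0 < D 0\<close> by (cases "s = 0") auto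
  then have "yhat < snd (phi s p)" "snd (phi s p) \<le> ybar"
    using rising[of 0 s] s height[of s] pS flow_0[OF pS(1)] by auto
  then have "(lam (snd (phi s p)), snd (phi s p)) \<in> Gamma_bar"
    by (rule separatrix_in_Gamma_bar)
  moreover have "fst (phi s p) = lam (snd (phi s p))"
    using s(3) by (simp add: D_def)
  ultimately have "phi s p \<in> Gamma_bar"
    by (metis prod.collapse)
  then show False
    using Gamma_bar_if_flow_reaches[OF pS(1) s(1)] D_plus_not_Gamma_bar[OF p] by blast
qed

lemma D_plus_arrives_at_ybar:
  assumes p: "p \<in> D_plus ybar yhat lam"
  obtains a where "0 \<le> a" "snd (phi a p) = ybar" "xbar < fst (phi a p)"
    "\<And>r. 0 \<le> r \<Longrightarrow> r < a \<Longrightarrow> snd (phi r p) < ybar"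
proof -
  have pS: "p \<in> SS" "0 < snd p" "snd p \<le> ybar"
    using p by (auto simp: D_plus_def)
  obtain t1 where t1: "0 < t1" "R (phi t1 p) = 1" "\<And>r. 0 \<le> r \<Longrightarrow> r < t1 \<Longrightarrow> 1 < R (phi r p)"
    using first_time_R_one[OF pS(1,2) D_plus_R_gt_one[OF p]] by blast
  obtain a where a: "0 \<le> a" "a \<le> t1" "snd (phi a p) = ybar"
    "\<And>r. 0 \<le> r \<Longrightarrow> r < a \<Longrightarrow> snd (phi r p) < ybar"
    using flow_first_arrival[OF pS(1,3) less_imp_le[OF t1(1)] D_plus_reaches_ybar[OF p t1]] by blast
  have aS: "(fst (phi a p), ybar) \<in> SS"
    using flow_in_SS[OF pS(1) a(1)] a(3) by (metis prod.collapse)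
  have "a \<noteq> t1"
  proof
    assume "a = t1"
    then have "phi t1 p = (xbar, ybar)"
      using R_one_on_level_ybar[OF aS] t1(2) a(3) by (metis prod.collapse)
    then have "p \<in> Gamma_bar"
      using pS(1) t1(1) by (auto simp: Gamma_minus_def intro!: exI[of _ t1])
    then show False
      using D_plus_not_Gamma_bar[OF p] by blast
  qed
  then have "1 < Rn \<gamma> \<beta> (fst (phi a p)) ybar"
    using t1(3)[OF a(1)] a(2,3) by simp
  then have "xbar < fst (phi a p)"
    using Rn_strict_mono_x[OF aS bar_in_SS] R_bar
    by (cases "fst (phi a p)" xbar rule: linorder_cases) auto
  then show ?thesis
    using that a by blast
qed

lemma hits_J:
  assumes "p \<in> D_plus ybar yhat lam"
  shows "0 \<le> T_hit phi xbar ybar p" "phi (T_hit phi xbar ybar p) p \<in> J_set xbar ybar"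
    "\<And>t. 0 \<le> t \<Longrightarrow> t < T_hit phi xbar ybar p \<Longrightarrow> snd (phi t p) < ybar"
proof -
  obtain a where a: "0 \<le> a" "snd (phi a p) = ybar" "xbar < fst (phi a p)"
    "\<And>r. 0 \<le> r \<Longrightarrow> r < a \<Longrightarrow> snd (phi r p) < ybar"
    using D_plus_arrives_at_ybar[OF assms] by blast
  have J: "phi a p \<in> J_set xbar ybar"
    using flow_in_SS[of p a] assms a by (auto simp: J_set_def D_plus_def SS_def split: prod.splits)
  have "T_hit phi xbar ybar p = a"
    unfolding T_hit_def
  proof (rule Least_equality)
    fix t assume "0 \<le> t \<and> phi t p \<in> J_set xbar ybar"
    then show "a \<le> t"
      using a(4)[of t] by (force simp: J_set_def)
  qed (use a(1) J in simp)
  with a J show "0 \<le> T_hit phi xbar ybar p" "phi (T_hit phi xbar ybar p) p \<in> J_set xbar ybar"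
    "\<And>t. 0 \<le> t \<Longrightarrow> t < T_hit phi xbar ybar p \<Longrightarrow> snd (phi t p) < ybar"
    by auto
qed

end

section \<open>The feedback control\<close>

locale cbf_feedback = cbf_separatrix +
  fixes p0 :: "real \<times> real" and T0 T1 h0 :: real
    and u :: "real \<Rightarrow> real" and z :: "real \<Rightarrow> real \<times> real"
  assumes init: "p0 \<in> D_plus ybar yhat lam"
    and T0_def: "T0 = T_hit phi xbar ybar p0"
    and h0_def: "h0 = h_hit phi xbar ybar p0"
    and T1_def: "T1 = T0 + (h0 - xbar) / (\<gamma> * ybar)"
    and u_def: "u = (\<lambda>t. if t < T0 \<or> t > T1 then 0 else rho \<gamma> \<beta> (h0 - \<gamma> * (t - T0) * ybar) ybar)"
    and sol: "cbf_sol \<gamma> \<beta> u p0 z"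
begin

abbreviation x_seg :: "real \<Rightarrow> real" where
  "x_seg t \<equiv> h0 - \<gamma> * (t - T0) * ybar"

lemma p0_in_SS: "p0 \<in> SS"
  using init by (auto simp: D_plus_def)

lemma hitting_point:
  shows "0 \<le> T0" "phi T0 p0 = (h0, ybar)" "xbar < h0" "h0 + ybar \<le> 1"
    and "\<And>t. 0 \<le> t \<Longrightarrow> t < T0 \<Longrightarrow> snd (phi t p0) < ybar"
  using hits_J[OF init] unfolding T0_def[symmetric] h0_def h_hit_def
  by (auto simp: J_set_def prod_eq_iff)

lemma T0_less_T1: "T0 < T1"
  using hitting_point(3) gamma_pos ybar_pos by (simp add: T1_def)

lemma x_seg_T1: "x_seg T1 = xbar"
  using gamma_pos ybar_pos by (simp add: T1_def)

lemma x_seg_range: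
  assumes "t \<in> {T0..T1}"
  shows "x_seg t \<in> {xbar..h0}"
proof -
  have "\<gamma> * (t - T0) * ybar \<le> \<gamma> * (T1 - T0) * ybar"
    using assms gamma_pos ybar_pos by (intro mult_right_mono mult_left_mono) auto
  then show ?thesis
    using assms gamma_pos ybar_pos x_seg_T1 by auto
qed

lemma level_segment_in_SS: "x \<in> {xbar..h0} \<Longrightarrow> (x, ybar) \<in> SS"
  using hitting_point(4) xbar_pos ybar_pos by (auto simp: SS_def)

lemma control_outside: "t < T0 \<or> T1 < t \<Longrightarrow> u t = 0"
  by (simp add: u_def)

lemma control_on_segment: "t \<in> {T0..T1} \<Longrightarrow> u t = rho \<gamma> \<beta> (x_seg t) ybar"
  by (simp add: u_def)

lemma control_range: "u t \<in> {0..1}"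
  using rho_on_level_ybar[OF _ level_segment_in_SS] x_seg_range control_on_segment control_outside
  by (cases "t \<in> {T0..T1}") auto

lemma trajectory_before_T0: "0 \<le> t \<Longrightarrow> t \<le> T0 \<Longrightarrow> z t = phi t p0"
  using cbf_sol_unique[OF sol flow_sol[OF p0_in_SS]] control_outside by auto

text \<open>On the segment \<open>(1 - u) R = 1\<close>, so the controlled field is \<open>(- \<gamma> ybar, 0)\<close> there.\<close>
lemma segment_solves_controlled_system:
  assumes "r \<in> {T0..T1}"
  shows "((\<lambda>t. (x_seg t, ybar)) has_vector_derivative cbf_field \<gamma> \<beta> (u r) (x_seg r, ybar)) (at r)"
proof -
  have balance: "(1 - u r) * Rn \<gamma> \<beta> (x_seg r) ybar = 1"
    using rho_on_level_ybar(3)[OF _ level_segment_in_SS] x_seg_range[OF assms]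
      control_on_segment[OF assms] by auto
  have "cbf_field \<gamma> \<beta> (u r) (x_seg r, ybar) = (- \<gamma> * ybar * ((1 - u r) * Rn \<gamma> \<beta> (x_seg r) ybar),
      \<gamma> * ((1 - u r) * Rn \<gamma> \<beta> (x_seg r) ybar - 1) * ybar)"
    by (simp add: cbf_field_def algebra_simps)
  also have "\<dots> = (- \<gamma> * ybar, 0)"
    unfolding balance by simp
  finally show ?thesis
    by (auto intro!: derivative_eq_intros)
qed

lemma trajectory_on_segment:
  assumes "T0 \<le> t" "t \<le> T1"
  shows "z t = (x_seg t, ybar)"
proof -
  obtain S where S: "finite S"
    "\<And>r. r \<in> {T0<..<t} - S \<Longrightarrow> (z has_vector_derivative cbf_field \<gamma> \<beta> (u r) (z r)) (at r)"
    using cbf_sol_derivative[OF sol hitting_point(1)] by blast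
  show ?thesis
  proof (rule solutions_agree[OF S(1) assms(1), where w = "\<lambda>t. (x_seg t, ybar)"])
    show "continuous_on {T0..t} z"
      by (rule cbf_solD(4)[OF sol hitting_point(1)])
    show "\<And>r. r \<in> {T0..t} \<Longrightarrow> z r \<in> SS"
      using cbf_solD(2)[OF sol] hitting_point(1) by auto
    show "\<And>r. r \<in> {T0..t} \<Longrightarrow> (x_seg r, ybar) \<in> SS"
      using level_segment_in_SS x_seg_range assms by auto
    show "\<And>r. r \<in> {T0<..<t} - S \<Longrightarrow>
        ((\<lambda>t. (x_seg t, ybar)) has_vector_derivative cbf_field \<gamma> \<beta> (u r) (x_seg r, ybar)) (at r)"
      using assms by (intro segment_solves_controlled_system) auto
  next
    show "z T0 = (x_seg T0, ybar)"
      using trajectory_before_T0[OF hitting_point(1) order.refl] hitting_point(2) by simp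
  qed (use S(2) control_range in \<open>auto intro!: continuous_intros\<close>)
qed

lemma trajectory_after_T1:
  assumes "T1 < t"
  shows "snd (z t) < ybar"
proof -
  have zT1: "z T1 = (xbar, ybar)"
    using trajectory_on_segment[OF less_imp_le[OF T0_less_T1] order.refl] x_seg_T1 by simp
  have "cbf_sol \<gamma> \<beta> (\<lambda>s. u (s + T1)) (xbar, ybar) (\<lambda>s. z (s + T1))"
    using cbf_sol_shift[OF sol, of T1] hitting_point(1) T0_less_T1 zT1 by simp
  then have "z t = phi (t - T1) (xbar, ybar)"
    using cbf_sol_unique[OF _ flow_sol[OF bar_in_SS], where b = "t - T1"] control_outside assms by force
  moreover have "snd (phi (t - T1) (xbar, ybar)) < snd (phi 0 (xbar, ybar))"
    using R_below_one_persists[OF flow_sol[OF bar_in_SS] _ order.refl] R_bar ybar_pos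
      flow_0[OF bar_in_SS] assms
    by (intro snd_flow_decreasing[OF bar_in_SS]) auto
  ultimately show ?thesis
    using flow_0[OF bar_in_SS] by simp
qed

lemma trajectory_feasible: "0 \<le> t \<Longrightarrow> snd (z t) \<le> ybar"
  using trajectory_before_T0 hitting_point(5)[of t] trajectory_on_segment trajectory_after_T1
  by (cases "t < T0"; cases "t \<le> T1") (auto intro: less_imp_le)

lemma control_feedback: "0 \<le> t \<Longrightarrow> u t = mu \<gamma> \<beta> ybar (fst (z t)) (snd (z t))"
proof (cases "t \<in> {T0..T1}")
  case True
  then show ?thesis
    using trajectory_on_segment control_on_segment rho_on_level_ybar(1)[OF _ level_segment_in_SS]
      x_seg_range[OF True] by (auto simp: mu_def pos_part_def)
next
  case False
  assume "0 \<le> t"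
  then have "snd (z t) < ybar"
    using False trajectory_before_T0 hitting_point(5) trajectory_after_T1 by force
  then show ?thesis
    using False control_outside by (auto simp: mu_def)
qed

lemma control_has_integral:
  "(u has_integral 1 / (\<gamma> * ybar) * integral {xbar..h0} (\<lambda>x. rho \<gamma> \<beta> x ybar)) {0..}"
proof -
  have "continuous_on {xbar..h0} (\<lambda>x. \<beta> (fst (x, ybar)) (snd (x, ybar)))"
    using level_segment_in_SS
    by (intro continuous_on_compose2[OF continuous_on_beta] continuous_intros) auto
  moreover have "x * \<beta> x ybar \<noteq> 0" if "x \<in> {xbar..h0}" for x
    using beta_pos[OF level_segment_in_SS[OF that]] xbar_pos that by auto
  ultimately have "continuous_on {xbar..h0} (\<lambda>x. rho \<gamma> \<beta> x ybar)"
    unfolding rho_def by (intro continuous_intros) auto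
  from has_integral_reversed_affine[OF _ less_imp_le[OF hitting_point(3)] this, of "\<gamma> * ybar" T0]
  have "((\<lambda>t. rho \<gamma> \<beta> (x_seg t) ybar) has_integral
      integral {xbar..h0} (\<lambda>x. rho \<gamma> \<beta> x ybar) / (\<gamma> * ybar)) {T0..T1}"
    using gamma_pos ybar_pos by (simp add: T1_def algebra_simps)
  then have "(u has_integral 1 / (\<gamma> * ybar) * integral {xbar..h0} (\<lambda>x. rho \<gamma> \<beta> x ybar)) {T0..T1}"
    by (rule has_integral_eq_rhs[OF has_integral_cong[THEN iffD1, rotated]]) (auto simp: control_on_segment)
  then show ?thesis
    by (rule has_integral_on_superset) (use control_outside hitting_point(1) in auto)
qed

end

theorem proposition3:
  fixes \<gamma> :: real and \<beta> :: "real \<Rightarrow> real \<Rightarrow> real"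
    and beta_x beta_y beta_xx beta_xy beta_yx beta_yy :: "real \<times> real \<Rightarrow> real"
    and phi :: "real \<Rightarrow> real \<times> real \<Rightarrow> real \<times> real"
    and ytil ybar xbar yhat :: real and lam :: "real \<Rightarrow> real"
    and x0 y0 T0 T1 h0 :: real and u :: "real \<Rightarrow> real" and z :: "real \<Rightarrow> real \<times> real"
  assumes gamma_pos: "\<gamma> > 0"
    and beta_pos: "\<forall>(x, y)\<in>SS. \<beta> x y > 0"
    and beta_C2: "\<exists>U. open U \<and> SS \<subseteq> U \<and>
        (\<forall>p\<in>U. ((\<lambda>q. \<beta> (fst q) (snd q)) has_derivative (\<lambda>v. beta_x p * fst v + beta_y p * snd v)) (at p)
             \<and> (beta_x has_derivative (\<lambda>v. beta_xx p * fst v + beta_xy p * snd v)) (at p)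
             \<and> (beta_y has_derivative (\<lambda>v. beta_yx p * fst v + beta_yy p * snd v)) (at p))
        \<and> continuous_on U beta_xx \<and> continuous_on U beta_xy \<and> continuous_on U beta_yx \<and> continuous_on U beta_yy"
    and assumption1: "\<forall>(x, y)\<in>SS. x * beta_x (x, y) + \<beta> x y > 0 \<and> beta_y (x, y) \<le> 0"
    and beta_10: "\<beta> 1 0 > \<gamma>"
    and ytil: "0 < ytil" "ytil < 1" "Rn \<gamma> \<beta> (1 - ytil) ytil = 1"
    and ytil_unique: "\<forall>y\<in>{0<..<1}. Rn \<gamma> \<beta> (1 - y) y = 1 \<longrightarrow> y = ytil"
    and ybar: "0 < ybar" "ybar < ytil"
    and xbar: "(xbar, ybar) \<in> SS" "Rn \<gamma> \<beta> xbar ybar = 1"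
    and phi: "\<forall>p\<in>SS. cbf_sol \<gamma> \<beta> (\<lambda>_. 0) p (\<lambda>t. phi t p)"
    and yhat: "0 \<le> yhat" "yhat \<le> ybar"
    and lam_C1: "\<exists>D. (\<forall>y\<in>{yhat..ybar}. (lam has_real_derivative D y) (at y within {yhat..ybar}))
                     \<and> continuous_on {yhat..ybar} D"
    and lam_decr: "\<forall>y1\<in>{yhat..ybar}. \<forall>y2\<in>{yhat..ybar}. y1 < y2 \<longrightarrow> lam y2 < lam y1"
    and lam_range: "lam ` {yhat..ybar} \<subseteq> {xbar..1}"
    and lam_ybar: "lam ybar = xbar"
    and Gamma_closure: "closure (Gamma_minus phi (xbar, ybar)) = {(lam y, y) | y. yhat \<le> y \<and> y \<le> ybar}"
    and init: "(x0, y0) \<in> D_plus ybar yhat lam"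
    and T0_def: "T0 = T_hit phi xbar ybar (x0, y0)"
    and h0_def: "h0 = h_hit phi xbar ybar (x0, y0)"
    and T1_def: "T1 = T0 + (h0 - xbar) / (\<gamma> * ybar)"
    and u_def: "u = (\<lambda>t. if t < T0 \<or> t > T1 then 0
                         else rho \<gamma> \<beta> (h0 - \<gamma> * (t - T0) * ybar) ybar)"
    and sol: "cbf_sol \<gamma> \<beta> u (x0, y0) z"
  shows "(\<forall>t. T0 < t \<and> t < T1 \<longrightarrow> z t = (h0 - \<gamma> * (t - T0) * ybar, ybar))
       \<and> (\<forall>t\<ge>0. u t = mu \<gamma> \<beta> ybar (fst (z t)) (snd (z t)))
       \<and> (\<forall>t\<ge>0. snd (z t) \<le> ybar)
       \<and> u integrable_on {0..}
       \<and> integral {0..} u = 1 / (\<gamma> * ybar) * integral {xbar..h0} (\<lambda>x. rho \<gamma> \<beta> x ybar)"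
proof -
  obtain U where U: "open U" "SS \<subseteq> U"
    and der: "\<And>p. p \<in> U \<Longrightarrow> ((\<lambda>q. \<beta> (fst q) (snd q)) has_derivative (\<lambda>v. beta_x p * fst v + beta_y p * snd v)) (at p)"
      "\<And>p. p \<in> U \<Longrightarrow> (beta_x has_derivative (\<lambda>v. beta_xx p * fst v + beta_xy p * snd v)) (at p)"
      "\<And>p. p \<in> U \<Longrightarrow> (beta_y has_derivative (\<lambda>v. beta_yx p * fst v + beta_yy p * snd v)) (at p)"
    using beta_C2 by blast
  have "continuous_on SS beta_x" "continuous_on SS beta_y"
    using U(2) by (auto intro!: continuous_at_imp_continuous_on has_derivative_continuous der(2,3))
  moreover obtain D where "\<And>y. y \<in> {yhat..ybar} \<Longrightarrow> (lam has_real_derivative D y) (at y within {yhat..ybar})"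
    using lam_C1 by blast
  then have "continuous_on {yhat..ybar} lam"
    by (rule DERIV_continuous_on)
  ultimately interpret cbf_feedback \<gamma> \<beta> beta_x beta_y phi xbar ybar yhat lam "(x0, y0)" T0 T1 h0 u z
    using gamma_pos beta_pos der(1) U(2) assumption1 phi xbar ybar yhat Gamma_closure init
      T0_def h0_def T1_def u_def sol
    by unfold_locales auto
  show ?thesis
    using trajectory_on_segment control_feedback trajectory_feasible control_has_integral
    by (auto simp: has_integral_iff)
qed

end
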